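(* Let $k\in\mathbb{N}$ and let $F\colon S_{\ell_\infty^k}\to S_{\ell_1^k}$ be an injective continuous map which does not increase support size. Then there is a permutation $\pi$ of $\{1,\dots,k\}$ such that $F\circ P_\pi$ is support preserving. In particular, $F$ preserves support size, i.e. $|\mathrm{supp}(F(x))|=|\mathrm{supp}(x)|$ for all $x\in S_{\ell_\infty^k}$.
   Context: $S_{\ell_p^k}$ is the unit sphere of $(\mathbb{R}^k,\|\cdot\|_p)$. $\mathrm{supp}(x)=\{i:x_i\neq0\}$. $F$ does not increase support size if $|\mathrm{supp}(F(x))|\le|\mathrm{supp}(x)|$ for all $x$; $G$ is support preserving if $\mathrm{supp}(G(x))=\mathrm{supp}(x)$ for all $x$. $P_\pi(x_j)_{j=1}^k=(x_{\pi(j)})_{j=1}^k$. *)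

theory Defs
  imports "HOL-Analysis.Analysis"
begin

text \<open>Vectors in R^k are modelled as real^'n, with 'n a finite index type of size k.\<close>

definition linf_norm :: "real^'n \<Rightarrow> real" where
  "linf_norm x = (MAX i\<in>UNIV. \<bar>x $ i\<bar>)"

definition l1_norm :: "real^'n \<Rightarrow> real" where
  "l1_norm x = (\<Sum>i\<in>UNIV. \<bar>x $ i\<bar>)"

definition sphere_linf :: "(real^'n) set" where
  "sphere_linf = {x. linf_norm x = 1}"

definition sphere_l1 :: "(real^'n) set" where
  "sphere_l1 = {x. l1_norm x = 1}"

definition supp :: "real^'n \<Rightarrow> 'n set" where
  "supp x = {i. x $ i \<noteq> 0}"

definition perm_coords :: "('n \<Rightarrow> 'n) \<Rightarrow> real^'n \<Rightarrow> real^'n" where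
  "perm_coords \<pi> x = (\<chi> j. x $ \<pi> j)"

end

theory Submission
  imports Defs "HOL-Homology.Invariance_of_Domain"
begin

(* Rescaling radially turns F into an injective continuous map G of the l1 sphere into
   itself that does not increase support size. The l1 sphere is the disjoint union of the
   open faces {x. sign_vec x = s}, one for each sign pattern s, and the face of s is an open
   subset of an affine space of dimension |supp s| - 1.
   By induction on m, G maps every face with m + 1 nonzero signs onto such a face, so that
   the points of support size at most m + 1 are all attained at that level. Indeed, by
   injectivity G x has the support size of x once the smaller levels are exhausted; sign
   vectors are locally constant among vectors of equal support size, so the connected image
   of a face lies in a single face; there it is open by invariance of domain and closed
   because the boundary of the compact closed face has smaller support. Counting faces
   gives surjectivity at level m + 1.
   By continuity G maps closed faces into closed faces, so the vertex +-e_i of a face goes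
   to a vertex +-e_j of the image face, and supp (G x) is the image of supp x under
   i |-> j. Comparing two faces of full support shows that j does not depend on the sign
   at e_i, which yields the permutation. *)

section \<open>Sign patterns and faces of the l1 sphere\<close>

lemma l1_norm_scaleR: "l1_norm (c *\<^sub>R x) = \<bar>c\<bar> * l1_norm x"
  by (simp add: l1_norm_def abs_mult sum_distrib_left)

lemma l1_norm_pos:
  assumes "x \<noteq> 0"
  shows "0 < l1_norm x"
proof -
  have "0 < norm x"
    using assms by simp
  also have "norm x \<le> l1_norm x"
    unfolding l1_norm_def by (rule norm_le_l1_cart)
  finally show ?thesis .
qed

lemma nonzero_if_sphere_l1: "x \<in> sphere_l1 \<Longrightarrow> x \<noteq> 0"
  by (auto simp: sphere_l1_def l1_norm_def)

lemma supp_nonempty_if_sphere_l1: "x \<in> sphere_l1 \<Longrightarrow> supp x \<noteq> {}"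
  using nonzero_if_sphere_l1 by (auto simp: supp_def vec_eq_iff)

lemma closed_sphere_l1: "closed sphere_l1"
proof -
  have "continuous_on UNIV (l1_norm :: real^'n \<Rightarrow> real)"
    unfolding l1_norm_def by (intro continuous_intros)
  then show ?thesis
    unfolding sphere_l1_def by (rule closed_Collect_eq) (rule continuous_on_const)
qed

lemma bounded_sphere_l1: "bounded sphere_l1"
  unfolding bounded_iff sphere_l1_def
  by (metis (mono_tags) l1_norm_def mem_Collect_eq norm_le_l1_cart)

lemma supp_scaleR: "c \<noteq> 0 \<Longrightarrow> supp (c *\<^sub>R x) = supp x"
  by (auto simp: supp_def)

lemma supp_axis: "e \<noteq> 0 \<Longrightarrow> supp (axis i e) = {i}"
  by (auto simp: supp_def axis_def)

lemma l1_norm_axis: "l1_norm (axis i e) = \<bar>e\<bar>"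
  unfolding l1_norm_def by (subst sum.remove[of _ i]) (auto simp: axis_def)

definition sign_vec :: "real^'n \<Rightarrow> real^'n" where
  "sign_vec x = (\<chi> i. sgn (x $ i))"

definition sign_patterns :: "(real^'n) set" where
  "sign_patterns = {s. \<forall>i. s $ i \<in> {-1, 0, 1}}"

lemma supp_sign_vec [simp]: "supp (sign_vec x) = supp x"
  by (auto simp: supp_def sign_vec_def sgn_if)

lemma sign_vec_in_sign_patterns: "sign_vec x \<in> sign_patterns"
  by (auto simp: sign_patterns_def sign_vec_def sgn_if)

lemma sign_patterns_component: "s \<in> sign_patterns \<Longrightarrow> s $ i \<in> {-1, 0, 1}"
  by (simp add: sign_patterns_def)

lemma sgn_sign_pattern: "s \<in> sign_patterns \<Longrightarrow> sgn (s $ i) = s $ i"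
  using sign_patterns_component[of s i] by auto

lemma sign_vec_eq_pattern_iff:
  assumes "s \<in> sign_patterns"
  shows "sign_vec x = s \<longleftrightarrow> (\<forall>i. (s $ i = 0 \<longrightarrow> x $ i = 0) \<and> (s $ i \<noteq> 0 \<longrightarrow> 0 < s $ i * x $ i))"
proof -
  have "sgn (x $ i) = s $ i \<longleftrightarrow> (s $ i = 0 \<longrightarrow> x $ i = 0) \<and> (s $ i \<noteq> 0 \<longrightarrow> 0 < s $ i * x $ i)" for i
    using sign_patterns_component[OF assms, of i] by (auto simp: sgn_if mult_pos_pos zero_less_mult_iff)
  then show ?thesis by (auto simp: sign_vec_def vec_eq_iff)
qed

lemma finite_sign_patterns: "finite (sign_patterns :: (real^'n) set)"
proof -
  have "(sign_patterns :: (real^'n) set) \<subseteq> vec_lambda ` (UNIV \<rightarrow>\<^sub>E {-1, 0, 1})"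
  proof
    fix s :: "real^'n"
    assume "s \<in> sign_patterns"
    then have "vec_nth s \<in> UNIV \<rightarrow>\<^sub>E {-1, 0, 1}" by (auto simp: sign_patterns_def)
    then show "s \<in> vec_lambda ` (UNIV \<rightarrow>\<^sub>E {-1, 0, 1})" by (rule rev_image_eqI) simp
  qed
  then show ?thesis by (rule finite_subset) (intro finite_imageI finite_PiE; simp)
qed

lemma inner_sign_vec: "sign_vec x \<bullet> x = l1_norm x"
  by (simp add: inner_vec_def l1_norm_def sign_vec_def abs_sgn mult.commute)

definition sign_cone :: "real^'n \<Rightarrow> (real^'n) set" where
  "sign_cone s = {x. \<forall>i. s $ i \<noteq> 0 \<longrightarrow> 0 < s $ i * x $ i}"

lemma sign_cone_eq_Inter: "sign_cone s = (\<Inter>i\<in>supp s. {x. 0 < s $ i * x $ i})"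
  by (auto simp: sign_cone_def supp_def)

lemma open_sign_cone: "open (sign_cone s)"
  unfolding sign_cone_eq_Inter
  by (intro open_INT finite ballI open_Collect_less continuous_intros)

lemma convex_sign_cone:
  fixes s :: "real^'n"
  shows "convex (sign_cone s)"
proof -
  have "{x::real^'n. 0 < s $ i * x $ i} = {x. axis i (s $ i) \<bullet> x > 0}" for i
    by (simp add: inner_axis' mult.commute)
  then show ?thesis
    unfolding sign_cone_eq_Inter by (auto intro!: convex_INT convex_halfspace_gt)
qed

lemma in_sign_cone_sign_vec: "x \<in> sign_cone (sign_vec x)"
  by (auto simp: sign_cone_def sign_vec_def sgn_if)

lemma sign_vec_eq_if_in_sign_cone:
  assumes s: "s \<in> sign_patterns" and y: "y \<in> sign_cone s" and card: "card (supp y) \<le> card (supp s)"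
  shows "sign_vec y = s"
proof -
  have "supp s \<subseteq> supp y"
    using y by (auto simp: sign_cone_def supp_def)
  then have "supp y = supp s" using card_seteq[OF finite _ card] by simp
  with y show ?thesis
    by (auto simp: sign_vec_eq_pattern_iff[OF s] sign_cone_def supp_def set_eq_iff)
qed

lemma sign_vec_constant_on_connected:
  assumes "connected A" and "\<And>y. y \<in> A \<Longrightarrow> card (supp y) = n"
  shows "sign_vec constant_on A"
proof (rule locally_constant_imp_constant[OF assms(1)])
  fix a
  assume a: "a \<in> A"
  show "\<exists>T. openin (top_of_set A) T \<and> a \<in> T \<and> (\<forall>y\<in>T. sign_vec y = sign_vec a)"
  proof (intro exI conjI ballI)
    show "openin (top_of_set A) (A \<inter> sign_cone (sign_vec a))"
      by (simp add: openin_open_Int open_sign_cone)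
    show "a \<in> A \<inter> sign_cone (sign_vec a)"
      using a in_sign_cone_sign_vec by blast
    fix y
    assume "y \<in> A \<inter> sign_cone (sign_vec a)"
    then show "sign_vec y = sign_vec a"
      using assms(2) a by (intro sign_vec_eq_if_in_sign_cone) (auto simp: sign_vec_in_sign_patterns)
  qed
qed

definition face_plane :: "real^'n \<Rightarrow> (real^'n) set" where
  "face_plane s = {x. (\<forall>i. s $ i = 0 \<longrightarrow> x $ i = 0) \<and> s \<bullet> x = 1}"

definition open_face :: "real^'n \<Rightarrow> (real^'n) set" where
  "open_face s = {x \<in> sphere_l1. sign_vec x = s}"

definition closed_face :: "real^'n \<Rightarrow> (real^'n) set" where
  "closed_face s = {x \<in> sphere_l1. \<forall>i. 0 \<le> s $ i * x $ i \<and> (s $ i = 0 \<longrightarrow> x $ i = 0)}"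

definition face_center :: "real^'n \<Rightarrow> real^'n" where
  "face_center s = s /\<^sub>R real (card (supp s))"

lemma face_plane_eq: "face_plane s = {x. \<forall>i. i \<notin> supp s \<longrightarrow> x $ i = 0} \<inter> {x. s \<bullet> x = 1}"
  by (auto simp: face_plane_def supp_def)

lemma affine_face_plane: "affine (face_plane s)"
  unfolding face_plane_eq
  by (intro affine_Int subspace_imp_affine affine_hyperplane) (auto simp: subspace_def)

lemma open_face_eq:
  assumes "s \<in> sign_patterns"
  shows "open_face s = face_plane s \<inter> sign_cone s"
proof (rule Set.set_eqI, rule iffI)
  fix x
  assume x: "x \<in> open_face s"
  then have "s \<bullet> x = 1"
    by (auto simp: open_face_def sphere_l1_def simp flip: inner_sign_vec)
  with x show "x \<in> face_plane s \<inter> sign_cone s"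
    by (auto simp: open_face_def face_plane_def sign_cone_def sign_vec_eq_pattern_iff[OF assms])
next
  fix x
  assume x: "x \<in> face_plane s \<inter> sign_cone s"
  then have "sign_vec x = s"
    by (auto simp: face_plane_def sign_cone_def sign_vec_eq_pattern_iff[OF assms])
  with x show "x \<in> open_face s"
    by (auto simp: open_face_def face_plane_def sphere_l1_def simp flip: inner_sign_vec)
qed

lemma open_face_subset_sphere: "open_face s \<subseteq> sphere_l1"
  by (auto simp: open_face_def)

lemma supp_open_face: "x \<in> open_face s \<Longrightarrow> supp x = supp s"
  using supp_sign_vec[of x] by (simp add: open_face_def)

lemma connected_open_face: "s \<in> sign_patterns \<Longrightarrow> connected (open_face s)"
  by (simp add: open_face_eq convex_connected convex_Int affine_imp_convex affine_face_plane convex_sign_cone)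

lemma openin_open_face: "s \<in> sign_patterns \<Longrightarrow> openin (top_of_set (face_plane s)) (open_face s)"
  by (simp add: open_face_eq openin_open_Int open_sign_cone)

lemma l1_norm_sign_pattern: "s \<in> sign_patterns \<Longrightarrow> l1_norm s = real (card (supp s))"
proof -
  assume s: "s \<in> sign_patterns"
  have "\<bar>s $ i\<bar> = (if i \<in> supp s then 1 else 0)" for i
    using sign_patterns_component[OF s, of i] by (auto simp: supp_def)
  then show ?thesis by (simp add: l1_norm_def sum.If_cases)
qed

lemma face_center_in_open_face:
  assumes "s \<in> sign_patterns" and "supp s \<noteq> {}"
  shows "face_center s \<in> open_face s"
proof -
  have c: "0 < real (card (supp s))" using assms(2) by (simp add: card_gt_0_iff)
  then have "l1_norm (face_center s) = 1"
    using assms(2) by (simp add: face_center_def l1_norm_scaleR l1_norm_sign_pattern[OF assms(1)] field_simps)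
  moreover have "sign_vec (face_center s) = s"
    using c by (simp add: sign_vec_def face_center_def vec_eq_iff sgn_mult sgn_sign_pattern[OF assms(1)])
  ultimately show ?thesis by (simp add: open_face_def sphere_l1_def)
qed

lemma aff_dim_face_plane:
  fixes s :: "real^'n"
  assumes "s \<in> sign_patterns" and "supp s \<noteq> {}"
  shows "aff_dim (face_plane s) = int (card (supp s)) - 1"
proof -
  let ?V = "{x::real^'n. \<forall>i. i \<notin> supp s \<longrightarrow> x $ i = 0}"
  have V: "subspace ?V" by (auto simp: subspace_def)
  have "dim ?V = card (supp s)"
    using dim_substandard_cart[where 'a=real, of "supp s"] dim_vec_eq[of ?V] by simp
  then have "aff_dim ?V = int (card (supp s))"
    using aff_dim_subspace[OF V] by simp
  moreover have "?V \<inter> {v. s \<bullet> v = 1} \<noteq> {}"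
    using face_center_in_open_face[OF assms] open_face_eq[OF assms(1)] face_plane_eq by blast
  moreover have "0 \<in> ?V" "0 \<notin> {v. s \<bullet> v = 1}" by auto
  then have "\<not> ?V \<subseteq> {v. s \<bullet> v = 1}" by blast
  ultimately show ?thesis
    by (auto simp: face_plane_eq aff_dim_affine_Int_hyperplane subspace_imp_affine[OF V])
qed

lemma open_face_subset_closed_face: "open_face s \<subseteq> closed_face s"
  by (auto simp: open_face_def closed_face_def sign_vec_def sgn_if split: if_splits)

lemma closed_face_component:
  assumes "s \<in> sign_patterns" and "x \<in> closed_face s"
  shows "s $ i * x $ i = \<bar>x $ i\<bar>"
proof -
  have "0 \<le> s $ i * x $ i" "s $ i = 0 \<longrightarrow> x $ i = 0"
    using assms(2) by (auto simp: closed_face_def)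
  with sign_patterns_component[OF assms(1), of i] show ?thesis by auto
qed

lemma inner_closed_face: "s \<in> sign_patterns \<Longrightarrow> x \<in> closed_face s \<Longrightarrow> s \<bullet> x = 1"
  by (simp add: inner_vec_def closed_face_component) (simp add: closed_face_def sphere_l1_def l1_norm_def)

lemma supp_closed_face_subset: "x \<in> closed_face s \<Longrightarrow> supp x \<subseteq> supp s"
  by (auto simp: closed_face_def supp_def)

lemma closed_face_supp_eq_imp_open_face:
  assumes "s \<in> sign_patterns" and "x \<in> closed_face s" and "supp x = supp s"
  shows "x \<in> open_face s"
  using assms by (auto simp: open_face_def closed_face_def sign_vec_eq_pattern_iff supp_def set_eq_iff
      order_le_less)

lemma compact_closed_face:
  fixes s :: "real^'n"
  shows "compact (closed_face s)"
proof -
  have "closed_face s = sphere_l1 \<inter> (\<Inter>i. {x. 0 \<le> s $ i * x $ i}) \<inter> (\<Inter>i\<in>{i. s $ i = 0}. {x. x $ i = 0})"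
    by (auto simp: closed_face_def)
  moreover have "closed {x::real^'n. 0 \<le> s $ i * x $ i}" "closed {x::real^'n. x $ i = 0}" for i
    by (intro closed_Collect_le closed_Collect_eq continuous_intros)+
  ultimately have "closed (closed_face s)"
    using closed_sphere_l1 by (auto intro!: closed_Int closed_INT)
  moreover have "closed_face s \<subseteq> sphere_l1" by (auto simp: closed_face_def)
  ultimately show ?thesis
    using bounded_sphere_l1 by (auto simp: compact_eq_bounded_closed intro: bounded_subset)
qed

lemma closed_face_subset_closure_open_face:
  assumes s: "s \<in> sign_patterns" and "supp s \<noteq> {}"
  shows "closed_face s \<subseteq> closure (open_face s)"
proof
  fix x
  assume x: "x \<in> closed_face s"
  let ?c = "face_center s"
  have c: "?c \<in> face_plane s" "?c \<in> sign_cone s"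
    using face_center_in_open_face[OF assms] open_face_eq[OF s] by auto
  have "open_segment x ?c \<subseteq> open_face s"
  proof
    fix y
    assume "y \<in> open_segment x ?c"
    then obtain u where u: "0 < u" "u < 1" and y: "y = (1 - u) *\<^sub>R x + u *\<^sub>R ?c"
      by (auto simp: in_segment)
    have "y \<in> face_plane s"
      using x c(1) by (auto simp: y face_plane_def inner_add_right inner_closed_face[OF s x] closed_face_def)
    moreover have "0 < (1 - u) * (s $ i * x $ i) + u * (s $ i * ?c $ i)" if "s $ i \<noteq> 0" for i
      using x c(2) u that by (intro add_nonneg_pos) (auto simp: closed_face_def sign_cone_def)
    then have "y \<in> sign_cone s"
      by (simp add: sign_cone_def y algebra_simps)
    ultimately show "y \<in> open_face s" by (simp add: open_face_eq[OF s])
  qed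
  then have "closure (open_segment x ?c) \<subseteq> closure (open_face s)"
    by (rule closure_mono)
  then show "x \<in> closure (open_face s)"
    using face_center_in_open_face[OF assms] closure_subset by (cases "x = ?c") auto
qed

lemma closed_face_singleton_supp:
  assumes s: "s \<in> sign_patterns" and y: "y \<in> closed_face s" and supp: "supp y = {c}"
  shows "y = axis c (s $ c)"
proof -
  have zero: "y $ j = 0" if "j \<noteq> c" for j
    using supp that by (auto simp: supp_def)
  then have "l1_norm y = \<bar>y $ c\<bar>"
    unfolding l1_norm_def by (subst sum.remove[of _ c]) auto
  then have "\<bar>y $ c\<bar> = 1"
    using y by (simp add: closed_face_def sphere_l1_def)
  then have "y $ c = s $ c"
    using closed_face_component[OF s y, of c] sign_patterns_component[OF s, of c] by auto
  then show ?thesis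
    using zero by (auto simp: axis_def vec_eq_iff)
qed

lemma axis_sgn_in_closed_face:
  assumes "i \<in> supp x"
  shows "axis i (sgn (x $ i)) \<in> closed_face (sign_vec x)"
proof -
  have "axis i (sgn (x $ i)) \<in> sphere_l1"
    using assms by (simp add: sphere_l1_def l1_norm_axis supp_def abs_sgn_eq)
  then show ?thesis
    by (auto simp: closed_face_def sign_vec_def axis_def sgn_if)
qed

section \<open>Support-non-increasing embeddings of the l1 sphere\<close>

definition sparse_sphere_l1 :: "nat \<Rightarrow> (real^'n) set" where
  "sparse_sphere_l1 m = {y \<in> sphere_l1. card (supp y) \<le> m}"

locale supp_nonincr_embedding =
  fixes G :: "real^'n \<Rightarrow> real^'n"
  assumes maps_sphere: "G ` sphere_l1 \<subseteq> sphere_l1"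
    and inj: "inj_on G sphere_l1"
    and cont: "continuous_on sphere_l1 G"
    and card_supp_le: "\<And>x. x \<in> sphere_l1 \<Longrightarrow> card (supp (G x)) \<le> card (supp x)"
begin

lemma card_supp_eq_if_sparse_covered:
  assumes cov: "sparse_sphere_l1 m \<subseteq> G ` sparse_sphere_l1 m"
    and x: "x \<in> sphere_l1" "card (supp x) = Suc m"
  shows "card (supp (G x)) = Suc m"
proof (rule ccontr)
  assume "card (supp (G x)) \<noteq> Suc m"
  then have "G x \<in> sparse_sphere_l1 m"
    using card_supp_le[OF x(1)] maps_sphere x by (auto simp: sparse_sphere_l1_def)
  then obtain x' where x': "x' \<in> sparse_sphere_l1 m" "G x' = G x"
    using cov by (metis imageE subsetD)
  then have "x' = x"
    using inj_onD[OF inj] x(1) by (auto simp: sparse_sphere_l1_def)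
  with x' x(2) show False by (simp add: sparse_sphere_l1_def)
qed

(* Any point of the face of s would do here; the center is a canonical choice. *)
definition image_pattern :: "real^'n \<Rightarrow> real^'n" where
  "image_pattern s = sign_vec (G (face_center s))"

lemma image_open_face_subset:
  assumes s: "s \<in> sign_patterns" "supp s \<noteq> {}"
    and card_eq: "\<And>x. x \<in> open_face s \<Longrightarrow> card (supp (G x)) = card (supp s)"
  shows "G ` open_face s \<subseteq> open_face (image_pattern s)"
proof -
  have "continuous_on (open_face s) G"
    using cont by (rule continuous_on_subset) (auto simp: open_face_def)
  then have "sign_vec constant_on G ` open_face s"
    using connected_open_face[OF s(1)] card_eq
    by (intro sign_vec_constant_on_connected[where n = "card (supp s)"] connected_continuous_image) auto
  moreover have "G (face_center s) \<in> G ` open_face s"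
    using face_center_in_open_face[OF s] by blast
  ultimately show ?thesis
    using maps_sphere by (auto simp: open_face_def constant_on_def image_pattern_def)
qed

lemma openin_image_open_face:
  assumes s: "s \<in> sign_patterns" and t: "t \<in> sign_patterns" "supp t \<noteq> {}"
    and card: "card (supp t) \<le> card (supp s)" and sub: "G ` open_face s \<subseteq> open_face t"
  shows "openin (top_of_set (open_face t)) (G ` open_face s)"
proof -
  have "supp s \<noteq> {}"
    using t(2) card by auto
  then have "aff_dim (face_plane t) \<le> aff_dim (face_plane s)"
    using aff_dim_face_plane[OF s] aff_dim_face_plane[OF t] card by simp
  moreover have "continuous_on (open_face s) G" "inj_on G (open_face s)"
    using continuous_on_subset[OF cont] inj_on_subset[OF inj] by (auto simp: open_face_def)
  moreover have "G ` open_face s \<subseteq> face_plane t"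
    using sub open_face_eq[OF t(1)] by blast
  ultimately have "openin (top_of_set (face_plane t)) (G ` open_face s)"
    using invariance_of_domain_affine_sets[OF openin_open_face[OF s] affine_face_plane affine_face_plane]
    by blast
  then show ?thesis
    by (rule openin_subset_trans[OF _ sub]) (simp add: open_face_eq[OF t(1)])
qed

lemma closedin_image_open_face:
  assumes s: "s \<in> sign_patterns" and card: "card (supp t) = card (supp s)"
    and sub: "G ` open_face s \<subseteq> open_face t"
  shows "closedin (top_of_set (open_face t)) (G ` open_face s)"
proof -
  have "G ` open_face s = open_face t \<inter> G ` closed_face s"
  proof
    show "G ` open_face s \<subseteq> open_face t \<inter> G ` closed_face s"
      using sub open_face_subset_closed_face by blast
    show "open_face t \<inter> G ` closed_face s \<subseteq> G ` open_face s"
    proof clarify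
      fix x
      assume x: "x \<in> closed_face s" and Gx: "G x \<in> open_face t"
      have "\<not> card (supp x) < card (supp s)"
        using card_supp_le[of x] x Gx card by (auto simp: closed_face_def open_face_def)
      then have "supp x = supp s"
        using supp_closed_face_subset[OF x] by (meson finite psubset_card_mono psubsetI)
      then show "G x \<in> G ` open_face s"
        using closed_face_supp_eq_imp_open_face[OF s x] by blast
    qed
  qed
  moreover have "compact (G ` closed_face s)"
    using compact_closed_face continuous_on_subset[OF cont]
    by (intro compact_continuous_image) (auto simp: closed_face_def)
  ultimately show ?thesis
    by (metis closedin_closed_Int compact_imp_closed)
qed

lemma image_open_face_eq:
  assumes s: "s \<in> sign_patterns" "supp s \<noteq> {}"
    and card_eq: "\<And>x. x \<in> open_face s \<Longrightarrow> card (supp (G x)) = card (supp s)"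
  shows "G ` open_face s = open_face (image_pattern s)"
proof -
  let ?t = "image_pattern s"
  have t: "?t \<in> sign_patterns"
    by (simp add: image_pattern_def sign_vec_in_sign_patterns)
  have card_t: "card (supp ?t) = card (supp s)"
    using card_eq face_center_in_open_face[OF s] by (simp add: image_pattern_def)
  then have "supp ?t \<noteq> {}"
    using s(2) by auto
  have sub: "G ` open_face s \<subseteq> open_face ?t"
    by (rule image_open_face_subset[OF s card_eq])
  have "openin (top_of_set (open_face ?t)) (G ` open_face s)"
    using openin_image_open_face[OF s(1) t \<open>supp ?t \<noteq> {}\<close> _ sub] card_t by simp
  moreover have "closedin (top_of_set (open_face ?t)) (G ` open_face s)"
    by (rule closedin_image_open_face[OF s(1) card_t sub])
  moreover have "G ` open_face s \<noteq> {}"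
    using face_center_in_open_face[OF s] by blast
  ultimately show ?thesis
    using connected_open_face[OF t] by (auto simp: connected_clopen)
qed

lemma eq_if_image_pattern_eq:
  assumes s: "s \<in> sign_patterns" "supp s \<noteq> {}"
    and image: "G ` open_face s' = open_face (image_pattern s')"
    and eq: "image_pattern s = image_pattern s'"
  shows "s = s'"
proof -
  have center: "face_center s \<in> open_face s"
    by (rule face_center_in_open_face[OF s])
  then have "G (face_center s) \<in> open_face (image_pattern s)"
    using maps_sphere by (auto simp: open_face_def image_pattern_def)
  then obtain x where x: "x \<in> open_face s'" "G (face_center s) = G x"
    unfolding eq image[symmetric] by blast
  then have "face_center s = x"
    using inj_onD[OF inj] center open_face_subset_sphere by blast
  then show "s = s'"
    using center x(1) by (simp add: open_face_def)
qed

lemma image_open_face_if_sparse_covered: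
  assumes cov: "sparse_sphere_l1 m \<subseteq> G ` sparse_sphere_l1 m"
    and s: "s \<in> sign_patterns" "card (supp s) = Suc m"
  shows "G ` open_face s = open_face (image_pattern s)"
    and "card (supp (image_pattern s)) = Suc m"
proof -
  have s_nonempty: "supp s \<noteq> {}"
    using s(2) by auto
  have card_G: "card (supp (G x)) = Suc m" if x: "x \<in> open_face s" for x
  proof -
    have "x \<in> sphere_l1"
      using x open_face_subset_sphere by blast
    then show ?thesis
      using card_supp_eq_if_sparse_covered[OF cov] supp_open_face[OF x] s(2) by simp
  qed
  then show "G ` open_face s = open_face (image_pattern s)"
    using s(2) by (intro image_open_face_eq s(1) s_nonempty) simp
  show "card (supp (image_pattern s)) = Suc m"
    using card_G face_center_in_open_face[OF s(1) s_nonempty] by (simp add: image_pattern_def)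
qed

lemma open_face_subset_image_if_sparse_covered:
  assumes cov: "sparse_sphere_l1 m \<subseteq> G ` sparse_sphere_l1 m"
    and t: "t \<in> sign_patterns" "card (supp t) = Suc m"
  shows "open_face t \<subseteq> G ` sparse_sphere_l1 (Suc m)"
proof -
  define P :: "(real^'n) set" where "P = {s \<in> sign_patterns. card (supp s) = Suc m}"
  have image: "G ` open_face s = open_face (image_pattern s)" "image_pattern s \<in> P" if "s \<in> P" for s
    using that image_open_face_if_sparse_covered[OF cov]
    by (auto simp: P_def image_pattern_def sign_vec_in_sign_patterns)
  have "inj_on image_pattern P"
  proof (rule inj_onI)
    fix s s'
    assume s: "s \<in> P" and s': "s' \<in> P" and eq: "image_pattern s = image_pattern s'"
    have "s \<in> sign_patterns" "supp s \<noteq> {}"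
      using s by (auto simp: P_def)
    then show "s = s'"
      by (rule eq_if_image_pattern_eq[OF _ _ image(1)[OF s'] eq])
  qed
  moreover have "finite P"
    using finite_sign_patterns unfolding P_def by (rule finite_subset[rotated]) auto
  ultimately have "image_pattern ` P = P"
    using image(2) by (intro endo_inj_surj) auto
  moreover have "t \<in> P"
    using t by (simp add: P_def)
  ultimately have "t \<in> image_pattern ` P"
    by simp
  then obtain s where s: "s \<in> P" and t_eq: "t = image_pattern s"
    by (rule imageE)
  have "open_face s \<subseteq> sparse_sphere_l1 (Suc m)"
  proof
    fix y
    assume y: "y \<in> open_face s"
    then show "y \<in> sparse_sphere_l1 (Suc m)"
      using s supp_open_face[OF y] open_face_subset_sphere by (auto simp: P_def sparse_sphere_l1_def)
  qed
  then have "G ` open_face s \<subseteq> G ` sparse_sphere_l1 (Suc m)"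
    by (rule image_mono)
  then show ?thesis
    by (simp only: image(1)[OF s] t_eq)
qed

lemma sparse_sphere_l1_covered: "sparse_sphere_l1 m \<subseteq> G ` sparse_sphere_l1 m"
proof (induction m)
  case 0
  then show ?case
    using supp_nonempty_if_sphere_l1 by (auto simp: sparse_sphere_l1_def)
next
  case (Suc m)
  show ?case
  proof
    fix y :: "real^'n"
    assume y: "y \<in> sparse_sphere_l1 (Suc m)"
    show "y \<in> G ` sparse_sphere_l1 (Suc m)"
    proof (cases "card (supp y) = Suc m")
      case True
      have "y \<in> open_face (sign_vec y)"
        using y by (simp add: open_face_def sparse_sphere_l1_def)
      then show ?thesis
        using open_face_subset_image_if_sparse_covered[OF Suc.IH sign_vec_in_sign_patterns] True by auto
    next
      case False
      then have "y \<in> sparse_sphere_l1 m"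
        using y by (auto simp: sparse_sphere_l1_def)
      moreover have "sparse_sphere_l1 m \<subseteq> sparse_sphere_l1 (Suc m)"
        by (auto simp: sparse_sphere_l1_def)
      ultimately show ?thesis
        using Suc.IH by blast
    qed
  qed
qed

lemma card_supp_image:
  assumes x: "x \<in> sphere_l1"
  shows "card (supp (G x)) = card (supp x)"
proof -
  have "card (supp x) \<noteq> 0"
    using supp_nonempty_if_sphere_l1[OF x] by simp
  then obtain m where "card (supp x) = Suc m"
    using not0_implies_Suc by blast
  then show ?thesis
    using card_supp_eq_if_sparse_covered[OF sparse_sphere_l1_covered x] by simp
qed

lemma image_open_face_sign_vec:
  assumes x: "x \<in> sphere_l1"
  shows "G ` open_face (sign_vec x) = open_face (sign_vec (G x))"
proof -
  let ?s = "sign_vec x"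
  have s: "?s \<in> sign_patterns" "supp ?s \<noteq> {}"
    using x supp_nonempty_if_sphere_l1 by (auto simp: sign_vec_in_sign_patterns)
  have "G ` open_face ?s = open_face (image_pattern ?s)"
  proof (rule image_open_face_eq[OF s])
    fix y
    assume y: "y \<in> open_face ?s"
    then have "y \<in> sphere_l1"
      using open_face_subset_sphere by blast
    then show "card (supp (G y)) = card (supp ?s)"
      using card_supp_image supp_open_face[OF y] by simp
  qed
  moreover from this have "G x \<in> open_face (image_pattern ?s)"
    using x by (auto simp: open_face_def)
  ultimately show ?thesis
    by (simp add: open_face_def)
qed

lemma image_closed_face_subset:
  assumes x: "x \<in> sphere_l1"
  shows "G ` closed_face (sign_vec x) \<subseteq> closed_face (sign_vec (G x))"
proof -
  let ?s = "sign_vec x"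
  have "closure (open_face ?s) \<subseteq> sphere_l1"
    by (rule closure_minimal[OF open_face_subset_sphere closed_sphere_l1])
  then have "G ` closure (open_face ?s) \<subseteq> closed_face (sign_vec (G x))"
  proof (intro image_closure_subset continuous_on_subset[OF cont])
    show "closed (closed_face (sign_vec (G x)))"
      by (rule compact_imp_closed[OF compact_closed_face])
    show "G ` open_face ?s \<subseteq> closed_face (sign_vec (G x))"
      unfolding image_open_face_sign_vec[OF x] by (rule open_face_subset_closed_face)
  qed
  moreover have "closed_face ?s \<subseteq> closure (open_face ?s)"
    using x supp_nonempty_if_sphere_l1
    by (intro closed_face_subset_closure_open_face) (auto simp: sign_vec_in_sign_patterns)
  ultimately show ?thesis
    by (meson image_mono order_trans)
qed

(* Meaningful for e = 1 and e = -1 only, where supp (G (axis i e)) is a singleton. *)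
definition vertex_index :: "'n \<Rightarrow> real \<Rightarrow> 'n" where
  "vertex_index i e = the_elem (supp (G (axis i e)))"

lemma supp_image_axis:
  assumes "\<bar>e\<bar> = 1"
  shows "supp (G (axis i e)) = {vertex_index i e}"
proof -
  have "axis i e \<in> sphere_l1"
    using assms by (simp add: sphere_l1_def l1_norm_axis)
  moreover have "supp (axis i e) = {i}"
    using assms supp_axis[of e i] by auto
  ultimately have "card (supp (G (axis i e))) = 1"
    using card_supp_image by simp
  then obtain c where "supp (G (axis i e)) = {c}"
    by (rule card_1_singletonE)
  then show ?thesis
    by (simp add: vertex_index_def)
qed

lemma image_axis_eq_vertex:
  assumes x: "x \<in> sphere_l1" and i: "i \<in> supp x"
  shows "G (axis i (sgn (x $ i))) = axis (vertex_index i (sgn (x $ i))) (sign_vec (G x) $ vertex_index i (sgn (x $ i)))"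
proof (rule closed_face_singleton_supp[OF sign_vec_in_sign_patterns])
  show "G (axis i (sgn (x $ i))) \<in> closed_face (sign_vec (G x))"
    using image_closed_face_subset[OF x] axis_sgn_in_closed_face[OF i] by blast
  show "supp (G (axis i (sgn (x $ i)))) = {vertex_index i (sgn (x $ i))}"
    using i by (intro supp_image_axis) (auto simp: supp_def abs_sgn_eq)
qed

lemma inj_on_vertex_index:
  assumes x: "x \<in> sphere_l1"
  shows "inj_on (\<lambda>i. vertex_index i (sgn (x $ i))) (supp x)"
proof (rule inj_onI)
  fix i j
  assume i: "i \<in> supp x" and j: "j \<in> supp x"
    and eq: "vertex_index i (sgn (x $ i)) = vertex_index j (sgn (x $ j))"
  have "G (axis i (sgn (x $ i))) = G (axis j (sgn (x $ j)))"
    using image_axis_eq_vertex[OF x i] image_axis_eq_vertex[OF x j] eq by simp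
  moreover have "axis i (sgn (x $ i)) \<in> sphere_l1" "axis j (sgn (x $ j)) \<in> sphere_l1"
    using i j by (auto simp: sphere_l1_def l1_norm_axis supp_def abs_sgn_eq)
  ultimately have "axis i (sgn (x $ i)) = axis j (sgn (x $ j))"
    by (rule inj_onD[OF inj])
  then have "sgn (x $ i) = sgn (x $ j) \<and> i = j \<or> sgn (x $ i) = 0 \<and> sgn (x $ j) = 0"
    by (simp only: axis_eq_axis)
  moreover have "sgn (x $ i) \<noteq> 0"
    using i by (simp add: supp_def sgn_eq_0_iff)
  ultimately show "i = j"
    by blast
qed

lemma supp_image_eq_vertex_indices:
  assumes x: "x \<in> sphere_l1"
  shows "supp (G x) = (\<lambda>i. vertex_index i (sgn (x $ i))) ` supp x"
proof -
  have "(\<lambda>i. vertex_index i (sgn (x $ i))) ` supp x \<subseteq> supp (G x)"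
  proof (rule image_subsetI)
    fix i
    assume i: "i \<in> supp x"
    have "supp (G (axis i (sgn (x $ i)))) \<subseteq> supp (G x)"
      using image_closed_face_subset[OF x] axis_sgn_in_closed_face[OF i] supp_closed_face_subset
      by fastforce
    moreover have "\<bar>sgn (x $ i)\<bar> = 1"
      using i by (simp add: supp_def abs_sgn_eq)
    ultimately show "vertex_index i (sgn (x $ i)) \<in> supp (G x)"
      by (simp add: supp_image_axis)
  qed
  moreover have "card ((\<lambda>i. vertex_index i (sgn (x $ i))) ` supp x) = card (supp (G x))"
    using card_image[OF inj_on_vertex_index[OF x]] card_supp_image[OF x] by simp
  ultimately have "(\<lambda>i. vertex_index i (sgn (x $ i))) ` supp x = supp (G x)"
    by (intro card_seteq) simp_all
  then show ?thesis
    by simp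
qed

lemma inj_vertex_index_full_supp:
  assumes s: "s \<in> sign_patterns" and full: "supp s = UNIV"
  shows "inj (\<lambda>i. vertex_index i (s $ i))"
proof -
  have c: "face_center s \<in> open_face s"
    using face_center_in_open_face[OF s] full by simp
  then have "sgn (face_center s $ i) = s $ i" for i
    by (auto simp: open_face_def sign_vec_def vec_eq_iff)
  then show ?thesis
    using inj_on_vertex_index[of "face_center s"] c supp_open_face[OF c] full
    by (simp add: open_face_def)
qed

lemma vertex_index_minus_one:
  fixes i :: 'n
  shows "vertex_index i (-1) = vertex_index i 1"
proof -
  let ?s = "(\<chi> j. if j = i then -1 else 1) :: real^'n"
  have inj_plus: "inj (\<lambda>j. vertex_index j 1)"
    using inj_vertex_index_full_supp[of "\<chi> j. 1"] by (simp add: sign_patterns_def supp_def)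
  have "inj (\<lambda>j. vertex_index j (if j = i then -1 else 1))"
    using inj_vertex_index_full_supp[of ?s] by (simp add: sign_patterns_def supp_def)
  then have "surj (\<lambda>j. vertex_index j (if j = i then -1 else 1))"
    by (simp add: finite_UNIV_inj_surj)
  then obtain k where k: "vertex_index i 1 = vertex_index k (if k = i then -1 else 1)"
    by (meson surjD)
  show ?thesis
  proof (cases "k = i")
    case False
    with k have "vertex_index i 1 = vertex_index k 1"
      by simp
    with inj_plus False show ?thesis
      by (auto dest: injD)
  qed (use k in simp)
qed

theorem supp_image_permutation:
  "\<exists>\<sigma>. \<sigma> permutes UNIV \<and> (\<forall>x\<in>sphere_l1. supp (G x) = \<sigma> ` supp x)"
proof -
  define \<sigma> where "\<sigma> = (\<lambda>i. vertex_index i 1)"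
  have "inj \<sigma>"
    using inj_vertex_index_full_supp[of "\<chi> j. 1"] by (simp add: \<sigma>_def sign_patterns_def supp_def)
  then have "bij \<sigma>"
    by (simp add: bij_def finite_UNIV_inj_surj)
  then have "\<sigma> permutes UNIV"
    by (rule bij_imp_permutes) simp
  moreover have "supp (G x) = \<sigma> ` supp x" if x: "x \<in> sphere_l1" for x
  proof -
    have "vertex_index i (sgn (x $ i)) = \<sigma> i" if "i \<in> supp x" for i
      using that vertex_index_minus_one by (auto simp: \<sigma>_def supp_def sgn_if)
    then show ?thesis
      using supp_image_eq_vertex_indices[OF x] by simp
  qed
  ultimately show ?thesis
    by blast
qed

end

section \<open>Transfer to the l-infinity sphere\<close>

lemma linf_norm_eq_infnorm: "linf_norm x = infnorm x"
  by (simp add: linf_norm_def infnorm_cart full_SetCompr_eq cSup_eq_Max)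

lemma nonzero_if_sphere_linf: "x \<in> sphere_linf \<Longrightarrow> x \<noteq> 0"
  by (auto simp: sphere_linf_def linf_norm_eq_infnorm infnorm_0)

lemma infnorm_normalize_in_sphere_linf: "y \<noteq> 0 \<Longrightarrow> y /\<^sub>R infnorm y \<in> sphere_linf"
  by (simp add: sphere_linf_def linf_norm_eq_infnorm infnorm_mul infnorm_eq_0 real_abs_infnorm)

lemma l1_normalize_in_sphere_l1: "x \<noteq> 0 \<Longrightarrow> x /\<^sub>R l1_norm x \<in> sphere_l1"
  using l1_norm_pos[of x] by (simp add: sphere_l1_def l1_norm_scaleR)

lemma infnorm_normalize_scaleR: "x \<in> sphere_linf \<Longrightarrow> 0 < c \<Longrightarrow> (c *\<^sub>R x) /\<^sub>R infnorm (c *\<^sub>R x) = x"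
  by (simp add: sphere_linf_def linf_norm_eq_infnorm infnorm_mul)

lemma l1_normalize_scaleR: "y \<in> sphere_l1 \<Longrightarrow> 0 < c \<Longrightarrow> (c *\<^sub>R y) /\<^sub>R l1_norm (c *\<^sub>R y) = y"
  by (simp add: sphere_l1_def l1_norm_scaleR)

lemma bij_betw_sphere_l1_sphere_linf:
  "bij_betw (\<lambda>y. y /\<^sub>R infnorm y) sphere_l1 sphere_linf"
proof (rule bij_betw_byWitness[where f' = "\<lambda>x. x /\<^sub>R l1_norm x"])
  show "\<forall>y\<in>sphere_l1. (y /\<^sub>R infnorm y) /\<^sub>R l1_norm (y /\<^sub>R infnorm y) = y"
    by (intro ballI l1_normalize_scaleR) (simp_all add: infnorm_pos_lt nonzero_if_sphere_l1)
  show "\<forall>x\<in>sphere_linf. (x /\<^sub>R l1_norm x) /\<^sub>R infnorm (x /\<^sub>R l1_norm x) = x"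
    by (intro ballI infnorm_normalize_scaleR) (simp_all add: l1_norm_pos nonzero_if_sphere_linf)
  show "(\<lambda>y. y /\<^sub>R infnorm y) ` sphere_l1 \<subseteq> sphere_linf"
    using nonzero_if_sphere_l1 infnorm_normalize_in_sphere_linf by blast
  show "(\<lambda>x. x /\<^sub>R l1_norm x) ` sphere_linf \<subseteq> sphere_l1"
    using nonzero_if_sphere_linf l1_normalize_in_sphere_l1 by blast
qed

lemma continuous_on_sphere_l1_to_sphere_linf:
  "continuous_on sphere_l1 (\<lambda>y. y /\<^sub>R infnorm y)"
  by (intro continuous_intros ballI) (auto simp: infnorm_eq_0 dest: nonzero_if_sphere_l1)

lemma supp_infnorm_normalize: "supp (y /\<^sub>R infnorm y) = supp y"
  by (cases "y = 0") (simp_all add: supp_scaleR infnorm_eq_0)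

lemma supp_nonincr_embedding_sphere_linf:
  fixes F :: "real^'n \<Rightarrow> real^'n"
  assumes maps: "F ` sphere_linf \<subseteq> sphere_l1" and inj: "inj_on F sphere_linf"
    and cont: "continuous_on sphere_linf F"
    and card_le: "\<forall>x\<in>sphere_linf. card (supp (F x)) \<le> card (supp x)"
  shows "supp_nonincr_embedding (F \<circ> (\<lambda>y. y /\<^sub>R infnorm y))"
proof
  let ?R = "\<lambda>y::real^'n. y /\<^sub>R infnorm y"
  have R: "inj_on ?R sphere_l1" "?R ` sphere_l1 = sphere_linf"
    using bij_betw_sphere_l1_sphere_linf by (auto simp: bij_betw_def)
  show "(F \<circ> ?R) ` sphere_l1 \<subseteq> sphere_l1"
    unfolding image_comp[symmetric] R(2) by (rule maps)
  show "inj_on (F \<circ> ?R) sphere_l1"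
    using inj R by (simp add: comp_inj_on)
  show "continuous_on sphere_l1 (F \<circ> ?R)"
    by (rule continuous_on_compose[OF continuous_on_sphere_l1_to_sphere_linf]) (simp add: R(2) cont)
  show "card (supp ((F \<circ> ?R) y)) \<le> card (supp y)" if "y \<in> sphere_l1" for y
  proof -
    have "?R y \<in> sphere_linf"
      using R(2) that by blast
    then have "card (supp (F (?R y))) \<le> card (supp (?R y))"
      using card_le by blast
    then show ?thesis
      by (simp add: supp_infnorm_normalize)
  qed
qed

lemma supp_image_permutation_sphere_linf:
  fixes F :: "real^'n \<Rightarrow> real^'n"
  assumes "F ` sphere_linf \<subseteq> sphere_l1" and "inj_on F sphere_linf"
    and "continuous_on sphere_linf F"
    and "\<forall>x\<in>sphere_linf. card (supp (F x)) \<le> card (supp x)"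
  shows "\<exists>\<sigma>. \<sigma> permutes UNIV \<and> (\<forall>x\<in>sphere_linf. supp (F x) = \<sigma> ` supp x)"
proof -
  let ?R = "\<lambda>y::real^'n. y /\<^sub>R infnorm y"
  obtain \<sigma> where \<sigma>: "\<sigma> permutes UNIV" "\<forall>y\<in>sphere_l1. supp ((F \<circ> ?R) y) = \<sigma> ` supp y"
    using supp_nonincr_embedding.supp_image_permutation[OF supp_nonincr_embedding_sphere_linf[OF assms]]
    by blast
  have "supp (F x) = \<sigma> ` supp x" if "x \<in> sphere_linf" for x
  proof -
    have "x \<in> ?R ` sphere_l1"
      unfolding bij_betw_imp_surj_on[OF bij_betw_sphere_l1_sphere_linf] by (rule that)
    then obtain y where y: "y \<in> sphere_l1" and x: "x = ?R y"
      by (rule imageE)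
    then show ?thesis
      using \<sigma>(2) by (simp add: supp_infnorm_normalize)
  qed
  with \<sigma>(1) show ?thesis
    by blast
qed

lemma supp_perm_coords: "supp (perm_coords \<pi> x) = \<pi> -` supp x"
  by (auto simp: supp_def perm_coords_def)

lemma perm_coords_in_sphere_linf:
  assumes "\<pi> permutes UNIV" and "x \<in> sphere_linf"
  shows "perm_coords \<pi> x \<in> sphere_linf"
proof -
  have "(\<lambda>j. \<bar>x $ \<pi> j\<bar>) ` UNIV = (\<lambda>i. \<bar>x $ i\<bar>) ` \<pi> ` UNIV"
    by (simp add: image_image)
  then have "linf_norm (perm_coords \<pi> x) = linf_norm x"
    using permutes_surj[OF assms(1)] by (simp add: linf_norm_def perm_coords_def)
  with assms(2) show ?thesis
    by (simp add: sphere_linf_def)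
qed

theorem lemma4p6:
  fixes F :: "real^'n \<Rightarrow> real^'n"
  assumes maps: "F ` sphere_linf \<subseteq> sphere_l1"
    and inj: "inj_on F sphere_linf"
    and cont: "continuous_on sphere_linf F"
    and nonincr: "\<forall>x\<in>sphere_linf. card (supp (F x)) \<le> card (supp x)"
  shows "\<exists>\<pi>. \<pi> permutes (UNIV :: 'n set) \<and>
           (\<forall>x\<in>sphere_linf. supp (F (perm_coords \<pi> x)) = supp x)
         \<and> (\<forall>x\<in>sphere_linf. card (supp (F x)) = card (supp x))"
proof -
  obtain \<sigma> where \<sigma>: "\<sigma> permutes UNIV" and supp_F: "\<forall>x\<in>sphere_linf. supp (F x) = \<sigma> ` supp x"
    using supp_image_permutation_sphere_linf[OF maps inj cont nonincr] by blast
  have "supp (F (perm_coords \<sigma> x)) = supp x" if "x \<in> sphere_linf" for x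
    using supp_F perm_coords_in_sphere_linf[OF \<sigma> that] permutes_surj[OF \<sigma>]
    by (simp add: supp_perm_coords surj_image_vimage_eq)
  moreover have "card (supp (F x)) = card (supp x)" if "x \<in> sphere_linf" for x
    using supp_F that permutes_inj[OF \<sigma>] by (simp add: card_image inj_on_subset)
  ultimately show ?thesis
    using \<sigma> by blast
qed

end
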